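(* Let $S$ be a left handed skew lattice. Then $S$ satisfies the identities $x\wedge y\wedge((x\vee y)\wedge z)=x\wedge y\wedge z$ and $x\vee y\vee z=x\vee(y\wedge z)\vee y\vee z$. If moreover $S$ is strongly distributive or co-strongly distributive, then $S$ also satisfies $(x\wedge y)\vee((x\vee y)\wedge z)=(x\vee(y\wedge z))\wedge(y\vee z)$, and hence $S$ is a strong distributive solution of the Yang–Baxter equation.
   Context: A skew lattice is a set $S$ with two binary operations $\wedge,\vee$, each idempotent and associative, satisfying the absorption laws $x\wedge(x\vee y)=x=x\vee(x\wedge y)$ and $(x\wedge y)\vee y=y=(x\vee y)\wedge y$ for all $x,y\in S$. $S$ is left handed if $x\wedge y\wedge x=x\wedge y$ for all $x,y$ (equivalently $x\vee y\vee x=y\vee x$). $S$ is strongly distributive if it satisfies $(x\vee y)\wedge z=(x\wedge z)\vee(y\wedge z)$ and $x\wedge(y\vee z)=(x\wedge y)\vee(x\wedge z)$; it is co-strongly distributive if it satisfies $(x\wedge y)\vee z=(x\vee z)\wedge(y\vee z)$ and $x\vee(y\wedge z)=(x\vee y)\wedge(x\vee z)$. A skew lattice $S$ is a strong distributive solution if the map $r(x,y)=(x\wedge y,x\vee y)$ on $S\times S$ satisfies $(r\times\mathrm{id})\circ(\mathrm{id}\times r)\circ(r\times\mathrm{id})=(\mathrm{id}\times r)\circ(r\times\mathrm{id})\circ(\mathrm{id}\times r)$. *)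

theory Defs
  imports Main
begin

definition skew_lattice :: "('a \<Rightarrow> 'a \<Rightarrow> 'a) \<Rightarrow> ('a \<Rightarrow> 'a \<Rightarrow> 'a) \<Rightarrow> bool" where
  "skew_lattice m j \<longleftrightarrow>
     (\<forall>x. m x x = x) \<and> (\<forall>x. j x x = x) \<and>
     (\<forall>x y z. m (m x y) z = m x (m y z)) \<and>
     (\<forall>x y z. j (j x y) z = j x (j y z)) \<and>
     (\<forall>x y. m x (j x y) = x \<and> j x (m x y) = x) \<and>
     (\<forall>x y. j (m x y) y = y \<and> m (j x y) y = y)"

definition left_handed :: "('a \<Rightarrow> 'a \<Rightarrow> 'a) \<Rightarrow> ('a \<Rightarrow> 'a \<Rightarrow> 'a) \<Rightarrow> bool" where
  "left_handed m j \<longleftrightarrow> (\<forall>x y. m (m x y) x = m x y)"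

definition strongly_distributive :: "('a \<Rightarrow> 'a \<Rightarrow> 'a) \<Rightarrow> ('a \<Rightarrow> 'a \<Rightarrow> 'a) \<Rightarrow> bool" where
  "strongly_distributive m j \<longleftrightarrow>
     (\<forall>x y z. m (j x y) z = j (m x z) (m y z)) \<and>
     (\<forall>x y z. m x (j y z) = j (m x y) (m x z))"

definition co_strongly_distributive :: "('a \<Rightarrow> 'a \<Rightarrow> 'a) \<Rightarrow> ('a \<Rightarrow> 'a \<Rightarrow> 'a) \<Rightarrow> bool" where
  "co_strongly_distributive m j \<longleftrightarrow>
     (\<forall>x y z. j (m x y) z = m (j x z) (j y z)) \<and>
     (\<forall>x y z. j x (m y z) = m (j x y) (j x z))"

definition skew_r :: "('a \<Rightarrow> 'a \<Rightarrow> 'a) \<Rightarrow> ('a \<Rightarrow> 'a \<Rightarrow> 'a) \<Rightarrow> 'a \<times> 'a \<Rightarrow> 'a \<times> 'a" where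
  "skew_r m j p = (m (fst p) (snd p), j (fst p) (snd p))"

definition r12 :: "('a \<times> 'a \<Rightarrow> 'a \<times> 'a) \<Rightarrow> 'a \<times> 'a \<times> 'a \<Rightarrow> 'a \<times> 'a \<times> 'a" where
  "r12 r t = (case t of (a, b, c) \<Rightarrow> (case r (a, b) of (a', b') \<Rightarrow> (a', b', c)))"

definition r23 :: "('a \<times> 'a \<Rightarrow> 'a \<times> 'a) \<Rightarrow> 'a \<times> 'a \<times> 'a \<Rightarrow> 'a \<times> 'a \<times> 'a" where
  "r23 r t = (case t of (a, b, c) \<Rightarrow> (case r (b, c) of (b', c') \<Rightarrow> (a, b', c')))"

definition strong_distributive_solution :: "('a \<Rightarrow> 'a \<Rightarrow> 'a) \<Rightarrow> ('a \<Rightarrow> 'a \<Rightarrow> 'a) \<Rightarrow> bool" where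
  "strong_distributive_solution m j \<longleftrightarrow>
     (let r = skew_r m j in r12 r \<circ> r23 r \<circ> r12 r = r23 r \<circ> r12 r \<circ> r23 r)"

end

theory Submission
  imports Defs
begin

text \<open>Left-handedness makes x \<sqinter> y absorb any later meet with an element above y, and
  dually for joins; the first two identities follow at once. Expanding both sides of the braid relation for
  r(x, y) = (x \<sqinter> y, x \<squnion> y) on a triple shows that, given associativity, it is equivalent
  to the three identities, one per component.\<close>

lemma strong_distributive_solution_iff:
  fixes m j :: "'a \<Rightarrow> 'a \<Rightarrow> 'a"
  assumes meet_assoc: "\<And>x y z. m (m x y) z = m x (m y z)"
    and join_assoc: "\<And>x y z. j (j x y) z = j x (j y z)"
  shows "strong_distributive_solution m j \<longleftrightarrow>
         (\<forall>x y z. m (m x y) (m (j x y) z) = m (m x y) z) \<and>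
         (\<forall>x y z. j (m x y) (m (j x y) z) = m (j x (m y z)) (j y z)) \<and>
         (\<forall>x y z. j (j x y) z = j (j (j x (m y z)) y) z)"
  (is "_ \<longleftrightarrow> ?identities")
proof -
  define r where "r = skew_r m j"
  have braid_at: "(r12 r \<circ> r23 r \<circ> r12 r) (x, y, z) =
      (m (m x y) (m (j x y) z), j (m x y) (m (j x y) z), j (j x y) z) \<and>
    (r23 r \<circ> r12 r \<circ> r23 r) (x, y, z) =
      (m (m x y) z, m (j x (m y z)) (j y z), j (j (j x (m y z)) y) z)" for x y z
    by (simp add: r_def r12_def r23_def skew_r_def meet_assoc join_assoc)
  have "r12 r \<circ> r23 r \<circ> r12 r = r23 r \<circ> r12 r \<circ> r23 r \<longleftrightarrow> ?identities"
  proof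
    assume "r12 r \<circ> r23 r \<circ> r12 r = r23 r \<circ> r12 r \<circ> r23 r"
    then show ?identities
      using braid_at by (metis prod.inject)
  qed (simp add: fun_eq_iff braid_at del: comp_apply)
  then show ?thesis
    by (simp add: strong_distributive_solution_def r_def)
qed

locale left_handed_skew_lattice =
  fixes meet :: "'a \<Rightarrow> 'a \<Rightarrow> 'a" (infixl "\<sqinter>" 70)
    and join :: "'a \<Rightarrow> 'a \<Rightarrow> 'a" (infixl "\<squnion>" 65)
  assumes skew_lattice: "skew_lattice meet join"
    and left_handed: "left_handed meet join"
begin

lemma meet_idem: "x \<sqinter> x = x"
  and join_idem: "x \<squnion> x = x"
  and meet_assoc: "x \<sqinter> y \<sqinter> z = x \<sqinter> (y \<sqinter> z)"
  and join_assoc: "x \<squnion> y \<squnion> z = x \<squnion> (y \<squnion> z)"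
  and join_absorb_meet: "x \<sqinter> y \<squnion> y = y"
  and meet_absorb_join: "(x \<squnion> y) \<sqinter> y = y"
  using skew_lattice by (auto simp: skew_lattice_def)

lemma meet_left_handed: "x \<sqinter> y \<sqinter> x = x \<sqinter> y"
  using left_handed by (simp add: left_handed_def)

lemma meet_join_absorb_right: "y \<sqinter> (x \<squnion> y) = y"
proof -
  have "y \<sqinter> (x \<squnion> y) = y \<sqinter> (x \<squnion> y) \<sqinter> y" by (simp add: meet_left_handed)
  also have "\<dots> = y" by (simp add: meet_assoc meet_absorb_join meet_idem)
  finally show ?thesis .
qed

lemma join_left_handed: "x \<squnion> (y \<squnion> x) = y \<squnion> x"
proof -
  have "x \<squnion> (y \<squnion> x) = x \<sqinter> (y \<squnion> x) \<squnion> (y \<squnion> x)" by (simp add: meet_join_absorb_right)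
  also have "\<dots> = y \<squnion> x" by (rule join_absorb_meet)
  finally show ?thesis .
qed

lemma join_meet_absorb_left: "y \<sqinter> z \<squnion> y = y"
proof -
  have "y \<sqinter> z \<squnion> y = y \<sqinter> z \<sqinter> y \<squnion> y" by (simp add: meet_left_handed)
  also have "\<dots> = y" by (rule join_absorb_meet)
  finally show ?thesis .
qed

lemma meet_meet_join_identity: "x \<sqinter> y \<sqinter> ((x \<squnion> y) \<sqinter> z) = x \<sqinter> y \<sqinter> z"
  by (simp add: meet_assoc meet_join_absorb_right flip: meet_assoc[of y "x \<squnion> y"])

lemma join_join_meet_identity: "x \<squnion> y \<squnion> z = x \<squnion> y \<sqinter> z \<squnion> y \<squnion> z"
  by (simp add: join_assoc join_meet_absorb_left flip: join_assoc[of "y \<sqinter> z" y])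

lemma middle_identity_if_strongly_distributive:
  assumes "strongly_distributive meet join"
  shows "x \<sqinter> y \<squnion> (x \<squnion> y) \<sqinter> z = (x \<squnion> y \<sqinter> z) \<sqinter> (y \<squnion> z)"
proof -
  have distr_right: "\<And>x y z. (x \<squnion> y) \<sqinter> z = x \<sqinter> z \<squnion> y \<sqinter> z"
    and distr_left: "\<And>x y z. x \<sqinter> (y \<squnion> z) = x \<sqinter> y \<squnion> x \<sqinter> z"
    using assms by (auto simp: strongly_distributive_def)
  have "x \<sqinter> y \<squnion> (x \<squnion> y) \<sqinter> z = x \<sqinter> (y \<squnion> z) \<squnion> y \<sqinter> z"
    by (simp add: distr_right distr_left join_assoc)
  also have "\<dots> = x \<sqinter> (y \<squnion> z) \<squnion> y \<sqinter> (z \<sqinter> (y \<squnion> z))"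
    by (simp add: meet_join_absorb_right)
  also have "\<dots> = (x \<squnion> y \<sqinter> z) \<sqinter> (y \<squnion> z)"
    by (simp only: distr_right meet_assoc)
  finally show ?thesis .
qed

lemma middle_identity_if_co_strongly_distributive:
  assumes "co_strongly_distributive meet join"
  shows "x \<sqinter> y \<squnion> (x \<squnion> y) \<sqinter> z = (x \<squnion> y \<sqinter> z) \<sqinter> (y \<squnion> z)"
proof -
  have distr_right: "\<And>x y z. x \<sqinter> y \<squnion> z = (x \<squnion> z) \<sqinter> (y \<squnion> z)"
    and distr_left: "\<And>x y z. x \<squnion> y \<sqinter> z = (x \<squnion> y) \<sqinter> (x \<squnion> z)"
    using assms by (auto simp: co_strongly_distributive_def)
  have "x \<sqinter> y \<squnion> (x \<squnion> y) \<sqinter> z = (x \<squnion> (x \<squnion> y) \<sqinter> z) \<sqinter> (y \<squnion> (x \<squnion> y) \<sqinter> z)"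
    by (rule distr_right)
  also have "\<dots> = (x \<squnion> y) \<sqinter> (x \<squnion> z) \<sqinter> ((x \<squnion> y) \<sqinter> (y \<squnion> z))"
    by (simp add: distr_left join_left_handed join_idem flip: join_assoc)
  also have "\<dots> = (x \<squnion> y) \<sqinter> (x \<squnion> z) \<sqinter> (x \<squnion> y) \<sqinter> (y \<squnion> z)"
    by (simp add: meet_assoc)
  also have "\<dots> = (x \<squnion> y \<sqinter> z) \<sqinter> (y \<squnion> z)"
    by (simp add: meet_left_handed distr_left)
  finally show ?thesis .
qed

end

theorem mainTheorem7:
  fixes m j :: "'a \<Rightarrow> 'a \<Rightarrow> 'a"
  assumes "skew_lattice m j" and "left_handed m j"
  shows "(\<forall>x y z. m (m x y) (m (j x y) z) = m (m x y) z) \<and>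
         (\<forall>x y z. j (j x y) z = j (j (j x (m y z)) y) z) \<and>
         ((strongly_distributive m j \<or> co_strongly_distributive m j) \<longrightarrow>
            (\<forall>x y z. j (m x y) (m (j x y) z) = m (j x (m y z)) (j y z)) \<and>
            strong_distributive_solution m j)"
proof -
  interpret left_handed_skew_lattice m j
    using assms by unfold_locales
  have middle: "\<forall>x y z. j (m x y) (m (j x y) z) = m (j x (m y z)) (j y z)"
    if "strongly_distributive m j \<or> co_strongly_distributive m j"
    using that middle_identity_if_strongly_distributive
      middle_identity_if_co_strongly_distributive by blast
  show ?thesis
    using middle meet_meet_join_identity join_join_meet_identity
      strong_distributive_solution_iff[OF meet_assoc join_assoc]
    by blast
qed

end
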